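(* Every WD-algebra $\mathbf A$ is isomorphic to a subalgebra of $\mathcal A(\mathcal F(\mathbf A))$; more precisely, the map $\sigma_{\mathbf A}(a)=\{P\in X(\mathbf A)\colon a\in P\}$ is an injective homomorphism from $\mathbf A$ into $\mathcal A(\mathcal F(\mathbf A))$.
   Context: A WD-algebra is an algebra $(A,\wedge,\vee,\leftarrow,0,1)$ such that $(A,\wedge,\vee,0,1)$ is a bounded distributive lattice and for all $a,b,c\in A$: $a\leftarrow a=0$; $(a\vee b)\leftarrow c=(a\leftarrow c)\vee(b\leftarrow c)$; $a\leftarrow(b\wedge c)=(a\leftarrow b)\vee(a\leftarrow c)$; $a\leftarrow c\le(a\leftarrow b)\vee(b\leftarrow c)$. $X(\mathbf A)$ is the set of prime filters of $\mathbf A$; $S_{\mathbf A}$ is the relation on $X(\mathbf A)$ with $(P,Q)\in S_{\mathbf A}$ iff for all $a,b\in A$, $a\in Q$ and $b\notin Q$ imply $a\leftarrow b\in P$. $\mathcal F(\mathbf A)=(X(\mathbf A),\subseteq,S_{\mathbf A})$. For a structure $\mathcal F=(X,\le,S)$, $\mathcal A(\mathcal F)=(\mathrm{Up}(X),\cap,\cup,\Leftarrow_S,\emptyset,X)$, where $\mathrm{Up}(X)$ is the set of upsets of $(X,\le)$ and $U\Leftarrow_S V=\{x\in X\colon S(x)\cap(U\setminus V)\neq\emptyset\}$ with $S(x)=\{y\colon(x,y)\in S\}$. *)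

theory Defs
  imports Main
begin

text \<open>A WD-algebra: the bounded distributive lattice is the type class structure
  (inf, sup, bot = 0, top = 1) on type 'a, and imp a b stands for a \<leftarrow> b.\<close>
definition wd_algebra :: "('a::{distrib_lattice,bounded_lattice} \<Rightarrow> 'a \<Rightarrow> 'a) \<Rightarrow> bool" where
  "wd_algebra imp \<longleftrightarrow>
     (\<forall>a. imp a a = bot) \<and>
     (\<forall>a b c. imp (sup a b) c = sup (imp a c) (imp b c)) \<and>
     (\<forall>a b c. imp a (inf b c) = sup (imp a b) (imp a c)) \<and>
     (\<forall>a b c. imp a c \<le> sup (imp a b) (imp b c))"

definition prime_filter :: "'a::{distrib_lattice,bounded_lattice} set \<Rightarrow> bool" where
  "prime_filter P \<longleftrightarrow>
     top \<in> P \<and> bot \<notin> P \<and>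
     (\<forall>a b. a \<in> P \<and> a \<le> b \<longrightarrow> b \<in> P) \<and>
     (\<forall>a b. a \<in> P \<and> b \<in> P \<longrightarrow> inf a b \<in> P) \<and>
     (\<forall>a b. sup a b \<in> P \<longrightarrow> a \<in> P \<or> b \<in> P)"

definition prime_filters :: "'a::{distrib_lattice,bounded_lattice} set set" where
  "prime_filters = {P. prime_filter P}"

definition S_rel :: "('a::{distrib_lattice,bounded_lattice} \<Rightarrow> 'a \<Rightarrow> 'a) \<Rightarrow> ('a set \<times> 'a set) set" where
  "S_rel imp = {(P, Q). P \<in> prime_filters \<and> Q \<in> prime_filters \<and>
                 (\<forall>a b. a \<in> Q \<and> b \<notin> Q \<longrightarrow> imp a b \<in> P)}"

definition upsets :: "'x set \<Rightarrow> ('x \<Rightarrow> 'x \<Rightarrow> bool) \<Rightarrow> 'x set set" where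
  "upsets X le = {U. U \<subseteq> X \<and> (\<forall>x\<in>U. \<forall>y\<in>X. le x y \<longrightarrow> y \<in> U)}"

definition larrow_S :: "'x set \<Rightarrow> ('x \<times> 'x) set \<Rightarrow> 'x set \<Rightarrow> 'x set \<Rightarrow> 'x set" where
  "larrow_S X S U V = {x \<in> X. {y. (x, y) \<in> S} \<inter> (U - V) \<noteq> {}}"

definition sigma :: "'a::{distrib_lattice,bounded_lattice} \<Rightarrow> 'a set set" where
  "sigma a = {P \<in> prime_filters. a \<in> P}"

text \<open>h is a homomorphism from (A, inf, sup, imp, bot, top) into
  A(F(A)) = (Up(X(A)), \<inter>, \<union>, \<Leftarrow>_{S_A}, {}, X(A)).\<close>
definition hom_into_complex_algebra ::
  "('a::{distrib_lattice,bounded_lattice} \<Rightarrow> 'a \<Rightarrow> 'a) \<Rightarrow> ('a \<Rightarrow> 'a set set) \<Rightarrow> bool" where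
  "hom_into_complex_algebra imp h \<longleftrightarrow>
     (\<forall>a. h a \<in> upsets prime_filters (\<subseteq>)) \<and>
     (\<forall>a b. h (inf a b) = h a \<inter> h b) \<and>
     (\<forall>a b. h (sup a b) = h a \<union> h b) \<and>
     (\<forall>a b. h (imp a b) = larrow_S prime_filters (S_rel imp) (h a) (h b)) \<and>
     h bot = {} \<and> h top = prime_filters"

end

theory Submission
  imports Defs
begin

text \<open>Injectivity of \<open>sigma\<close> is the prime filter theorem, and \<open>sigma\<close> preserves the lattice
  operations because prime filters are prime. The real work is the inclusion
  \<open>sigma (a \<leftarrow> b) \<subseteq> sigma a \<Leftarrow> sigma b\<close>: for a prime filter \<open>P\<close> containing \<open>a \<leftarrow> b\<close> one needs
  a prime filter \<open>Q\<close> with \<open>a \<in> Q\<close>, \<open>b \<notin> Q\<close> and \<open>(P, Q) \<in> S\<close>, i.e. \<open>Q\<close> closed under the relation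
  \<open>c \<turnstile> d \<longleftrightarrow> c \<leftarrow> d \<notin> P\<close>. The WD-axioms make \<open>\<turnstile>\<close> a consequence relation on the lattice
  (a preorder extending \<open>\<le>\<close>, closed under meets on the right and joins on the left), and the
  usual Zorn argument for the prime filter theorem works for any such relation; the
  order \<open>\<le>\<close> itself is the special case giving injectivity.\<close>

locale lattice_consequence =
  fixes T :: "'a::{distrib_lattice,bounded_lattice} \<Rightarrow> 'a \<Rightarrow> bool"
  assumes consequence_of_le: "c \<le> d \<Longrightarrow> T c d"
    and consequence_trans: "T c d \<Longrightarrow> T d e \<Longrightarrow> T c e"
    and consequence_inf: "T c d1 \<Longrightarrow> T c d2 \<Longrightarrow> T c (inf d1 d2)"
    and consequence_sup: "T c1 d \<Longrightarrow> T c2 d \<Longrightarrow> T (sup c1 c2) d"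
begin

lemma consequence_antimono: "c' \<le> c \<Longrightarrow> T c d \<Longrightarrow> T c' d"
  using consequence_of_le consequence_trans by blast

lemma consequence_inf_left_mono: "m' \<le> m \<Longrightarrow> T (inf m x) e \<Longrightarrow> T (inf m' x) e"
  using consequence_antimono inf_mono order_refl by metis

definition consequence_filter :: "'a set \<Rightarrow> bool" where
  "consequence_filter F \<longleftrightarrow> (\<forall>c\<in>F. \<forall>d. T c d \<longrightarrow> d \<in> F) \<and> (\<forall>c\<in>F. \<forall>d\<in>F. inf c d \<in> F)"

lemma consequence_filter_principal: "consequence_filter {d. T a d}"
  unfolding consequence_filter_def using consequence_trans consequence_inf by blast

lemma consequence_filter_Union_chain:
  assumes "\<And>F. F \<in> C \<Longrightarrow> consequence_filter F"
    and "\<And>F G. F \<in> C \<Longrightarrow> G \<in> C \<Longrightarrow> F \<subseteq> G \<or> G \<subseteq> F"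
  shows "consequence_filter (\<Union>C)"
  unfolding consequence_filter_def
proof (intro conjI ballI)
  show "\<forall>d. T c d \<longrightarrow> d \<in> \<Union>C" if "c \<in> \<Union>C" for c
    using that assms(1) unfolding consequence_filter_def by blast
  show "inf c d \<in> \<Union>C" if "c \<in> \<Union>C" "d \<in> \<Union>C" for c d
  proof -
    from that obtain F G where FG: "F \<in> C" "G \<in> C" and "c \<in> F" "d \<in> G" by blast
    with assms(2)[OF FG] obtain H where "H \<in> C" "c \<in> H" "d \<in> H" by blast
    with assms(1) show ?thesis unfolding consequence_filter_def by blast
  qed
qed

lemma consequence_filter_adjoin:
  fixes x :: 'a
  assumes M: "consequence_filter M" and "m\<^sub>0 \<in> M"
  defines "F \<equiv> {e. \<exists>m\<in>M. T (inf m x) e}"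
  shows "consequence_filter F" and "M \<subseteq> F" and "x \<in> F"
proof -
  show "consequence_filter F"
    unfolding consequence_filter_def
  proof (intro conjI ballI)
    show "\<forall>e. T c e \<longrightarrow> e \<in> F" if "c \<in> F" for c
      using that consequence_trans unfolding F_def by blast
    show "inf c d \<in> F" if "c \<in> F" "d \<in> F" for c d
    proof -
      from that obtain m1 m2 where m: "m1 \<in> M" "m2 \<in> M" "T (inf m1 x) c" "T (inf m2 x) d"
        unfolding F_def by blast
      have "T (inf (inf m1 m2) x) c" "T (inf (inf m1 m2) x) d"
        using consequence_inf_left_mono[OF inf_le1 m(3)] consequence_inf_left_mono[OF inf_le2 m(4)] .
      moreover have "inf m1 m2 \<in> M" using M m(1,2) unfolding consequence_filter_def by blast
      ultimately show ?thesis unfolding F_def using consequence_inf by blast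
    qed
  qed
  show "M \<subseteq> F" unfolding F_def using consequence_of_le[OF inf_le1] by blast
  show "x \<in> F" unfolding F_def using \<open>m\<^sub>0 \<in> M\<close> consequence_of_le[OF inf_le2] by blast
qed

lemma maximal_separating_filter_exists:
  assumes "\<not> T a b"
  obtains M where "consequence_filter M" "a \<in> M" "b \<notin> M"
    and "\<And>F. consequence_filter F \<Longrightarrow> b \<notin> F \<Longrightarrow> M \<subseteq> F \<Longrightarrow> F = M"
proof -
  let ?A = "{F. consequence_filter F \<and> a \<in> F \<and> b \<notin> F}"
  have "{d. T a d} \<in> ?A"
    using consequence_filter_principal consequence_of_le assms by auto
  moreover have "\<Union>C \<in> ?A" if "C \<noteq> {}" "subset.chain ?A C" for C
  proof -
    have "C \<subseteq> ?A" "\<And>F G. F \<in> C \<Longrightarrow> G \<in> C \<Longrightarrow> F \<subseteq> G \<or> G \<subseteq> F"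
      using that(2) unfolding subset.chain_def by blast+
    then show ?thesis using that(1) consequence_filter_Union_chain[of C] by blast
  qed
  ultimately have "\<exists>M\<in>?A. \<forall>F\<in>?A. M \<subseteq> F \<longrightarrow> F = M"
    by (intro subset_Zorn_nonempty) blast+
  then obtain M where M: "consequence_filter M" "a \<in> M" "b \<notin> M"
    and max: "\<forall>F\<in>?A. M \<subseteq> F \<longrightarrow> F = M" by blast
  show thesis
    by (rule that[OF M]) (use max M(2) in blast)
qed

text \<open>A consequence filter maximal among those avoiding \<open>b\<close> is prime: if \<open>x \<notin> M\<close>, maximality
  forces \<open>b\<close> into the filter generated by \<open>M\<close> and \<open>x\<close>, and \<open>T\<close> being closed under joins on the
  left combines two such witnesses for \<open>x\<close> and \<open>y\<close> into one for \<open>sup x y\<close>.\<close>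
lemma maximal_separating_filter_prime:
  assumes M: "consequence_filter M" "a \<in> M" "b \<notin> M"
    and max: "\<And>F. consequence_filter F \<Longrightarrow> b \<notin> F \<Longrightarrow> M \<subseteq> F \<Longrightarrow> F = M"
  shows "prime_filter M"
proof -
  have up: "d \<in> M" if "c \<in> M" "c \<le> d" for c d
    using M(1) that consequence_of_le unfolding consequence_filter_def by blast
  have inf_closed: "inf c d \<in> M" if "c \<in> M" "d \<in> M" for c d
    using M(1) that unfolding consequence_filter_def by blast
  have witness: "\<exists>m\<in>M. T (inf m x) b" if "x \<notin> M" for x
  proof (rule ccontr)
    let ?F = "{e. \<exists>m\<in>M. T (inf m x) e}"
    assume "\<not> (\<exists>m\<in>M. T (inf m x) b)"
    then have "b \<notin> ?F" by blast
    with consequence_filter_adjoin[OF M(1,2), of x] max have "?F = M" by blast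
    with consequence_filter_adjoin(3)[OF M(1,2), of x] \<open>x \<notin> M\<close> show False by blast
  qed
  have prime: "x \<in> M \<or> y \<in> M" if "sup x y \<in> M" for x y
  proof (rule ccontr)
    assume "\<not> (x \<in> M \<or> y \<in> M)"
    then obtain m m' where "m \<in> M" "m' \<in> M" "T (inf m x) b" "T (inf m' y) b"
      using witness by blast
    then have "T (inf (inf m m') x) b" "T (inf (inf m m') y) b"
      using consequence_inf_left_mono[OF inf_le1] consequence_inf_left_mono[OF inf_le2] by blast+
    then have "T (inf (inf m m') (sup x y)) b"
      using consequence_sup by (simp add: inf_sup_distrib1)
    moreover have "inf (inf m m') (sup x y) \<in> M"
      using inf_closed \<open>m \<in> M\<close> \<open>m' \<in> M\<close> that by blast
    ultimately show False using M(1,3) unfolding consequence_filter_def by blast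
  qed
  have "top \<in> M" using up[OF M(2) top_greatest] .
  moreover have "bot \<notin> M" using up[of bot b] M(3) by auto
  ultimately show ?thesis
    unfolding prime_filter_def using up inf_closed prime by blast
qed

lemma prime_filter_separation:
  assumes "\<not> T a b"
  obtains Q where "prime_filter Q" "a \<in> Q" "b \<notin> Q" "\<And>c d. c \<in> Q \<Longrightarrow> T c d \<Longrightarrow> d \<in> Q"
proof -
  obtain M where M: "consequence_filter M" "a \<in> M" "b \<notin> M"
    and max: "\<And>F. consequence_filter F \<Longrightarrow> b \<notin> F \<Longrightarrow> M \<subseteq> F \<Longrightarrow> F = M"
    using maximal_separating_filter_exists[OF assms] by blast
  have "prime_filter M" using M max by (rule maximal_separating_filter_prime)
  with M show thesis by (intro that) (auto simp: consequence_filter_def)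
qed

end

lemma lattice_consequence_le: "lattice_consequence ((\<le>) :: 'a::{distrib_lattice,bounded_lattice} \<Rightarrow> 'a \<Rightarrow> bool)"
  by unfold_locales auto

lemma prime_filter_theorem:
  fixes a b :: "'a::{distrib_lattice,bounded_lattice}"
  assumes "\<not> a \<le> b"
  obtains Q where "prime_filter Q" "a \<in> Q" "b \<notin> Q"
  using lattice_consequence.prime_filter_separation[OF lattice_consequence_le assms] by blast

lemma prime_filter_mono: "prime_filter P \<Longrightarrow> x \<in> P \<Longrightarrow> x \<le> y \<Longrightarrow> y \<in> P"
  unfolding prime_filter_def by blast

lemma prime_filter_sup_iff: "prime_filter P \<Longrightarrow> sup x y \<in> P \<longleftrightarrow> x \<in> P \<or> y \<in> P"
  unfolding prime_filter_def by (meson sup_ge1 sup_ge2)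

lemma prime_filter_inf_iff: "prime_filter P \<Longrightarrow> inf x y \<in> P \<longleftrightarrow> x \<in> P \<and> y \<in> P"
  unfolding prime_filter_def by (meson inf_le1 inf_le2)

lemma wd_algebra_imp_antimono_right:
  assumes "wd_algebra imp" "d \<le> d'"
  shows "imp c d' \<le> imp c d"
proof -
  have "imp c d = sup (imp c d) (imp c d')"
    using assms unfolding wd_algebra_def by (metis inf_absorb1)
  then show ?thesis by (metis sup.cobounded2)
qed

lemma wd_algebra_lattice_consequence:
  assumes wd: "wd_algebra imp" and P: "prime_filter P"
  shows "lattice_consequence (\<lambda>c d. imp c d \<notin> P)"
proof
  have "imp c c \<notin> P" for c
    using wd P unfolding wd_algebra_def prime_filter_def by simp
  then show "imp c d \<notin> P" if "c \<le> d" for c d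
    using that prime_filter_mono[OF P] wd_algebra_imp_antimono_right[OF wd] by blast
  show "imp c e \<notin> P" if "imp c d \<notin> P" "imp d e \<notin> P" for c d e
    using that wd prime_filter_mono[OF P] prime_filter_sup_iff[OF P]
    unfolding wd_algebra_def by blast
  show "imp c (inf d1 d2) \<notin> P" if "imp c d1 \<notin> P" "imp c d2 \<notin> P" for c d1 d2
    using that wd prime_filter_sup_iff[OF P] unfolding wd_algebra_def by simp
  show "imp (sup c1 c2) d \<notin> P" if "imp c1 d \<notin> P" "imp c2 d \<notin> P" for c1 c2 d
    using that wd prime_filter_sup_iff[OF P] unfolding wd_algebra_def by simp
qed

lemma sigma_subset_iff: "sigma a \<subseteq> sigma b \<longleftrightarrow> a \<le> b"
proof
  show "a \<le> b" if "sigma a \<subseteq> sigma b"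
  proof (rule ccontr)
    assume "\<not> a \<le> b"
    then obtain Q where "prime_filter Q" "a \<in> Q" "b \<notin> Q" by (rule prime_filter_theorem)
    with that show False unfolding sigma_def prime_filters_def by blast
  qed
  show "sigma a \<subseteq> sigma b" if "a \<le> b"
    using that prime_filter_mono unfolding sigma_def prime_filters_def by blast
qed

lemma inj_sigma: "inj sigma"
  by (rule injI) (metis order_antisym sigma_subset_iff order_refl)

lemma sigma_upset: "sigma a \<in> upsets prime_filters (\<subseteq>)"
  unfolding upsets_def sigma_def by blast

lemma sigma_inf: "sigma (inf a b) = sigma a \<inter> sigma b"
  unfolding sigma_def prime_filters_def using prime_filter_inf_iff by blast

lemma sigma_sup: "sigma (sup a b) = sigma a \<union> sigma b"
  unfolding sigma_def prime_filters_def using prime_filter_sup_iff by blast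

lemma sigma_bot: "sigma bot = {}"
  unfolding sigma_def prime_filters_def prime_filter_def by blast

lemma sigma_top: "sigma top = prime_filters"
  unfolding sigma_def prime_filters_def prime_filter_def by blast

lemma sigma_imp:
  assumes wd: "wd_algebra imp"
  shows "sigma (imp a b) = larrow_S prime_filters (S_rel imp) (sigma a) (sigma b)"
proof
  show "sigma (imp a b) \<subseteq> larrow_S prime_filters (S_rel imp) (sigma a) (sigma b)"
  proof
    fix P assume "P \<in> sigma (imp a b)"
    then have P: "prime_filter P" "imp a b \<in> P"
      unfolding sigma_def prime_filters_def by auto
    obtain Q where Q: "prime_filter Q" "a \<in> Q" "b \<notin> Q"
      and S: "\<And>c d. c \<in> Q \<Longrightarrow> imp c d \<notin> P \<Longrightarrow> d \<in> Q"
      using lattice_consequence.prime_filter_separation[OF wd_algebra_lattice_consequence[OF wd P(1)]]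
        P(2) by blast
    have "(P, Q) \<in> S_rel imp" unfolding S_rel_def prime_filters_def using P(1) Q(1) S by blast
    moreover have "Q \<in> sigma a - sigma b" unfolding sigma_def prime_filters_def using Q by auto
    ultimately show "P \<in> larrow_S prime_filters (S_rel imp) (sigma a) (sigma b)"
      unfolding larrow_S_def prime_filters_def using P(1) by blast
  qed
  show "larrow_S prime_filters (S_rel imp) (sigma a) (sigma b) \<subseteq> sigma (imp a b)"
    unfolding larrow_S_def S_rel_def sigma_def by blast
qed

theorem theorem3p12:
  fixes imp :: "'a::{distrib_lattice,bounded_lattice} \<Rightarrow> 'a \<Rightarrow> 'a"
  assumes "wd_algebra imp"
  shows "inj (sigma :: 'a \<Rightarrow> 'a set set) \<and> hom_into_complex_algebra imp sigma"
  unfolding hom_into_complex_algebra_def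
  using inj_sigma sigma_upset sigma_inf sigma_sup sigma_imp[OF assms] sigma_bot sigma_top
  by blast

end
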